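(* Let $n\geq 2$. The Jonquières subgroup $\mathcal{B}_n$ is maximal among all solvable subgroups of $\mathrm{Aut}(\mathbb{A}^n_{\mathbb{C}})$: if $H$ is a solvable subgroup of $\mathrm{Aut}(\mathbb{A}^n_{\mathbb{C}})$ with $\mathcal{B}_n\subseteq H$, then $H=\mathcal{B}_n$.
   Context: $\mathrm{Aut}(\mathbb{A}^n_{\mathbb{C}})$ is the group of polynomial automorphisms of complex affine $n$-space; an automorphism is written $f=(f_1,\dots,f_n)$ with $f_i=f^*(x_i)\in\mathbb{C}[x_1,\dots,x_n]$, and composition is $g\circ f=(g_1(f_1,\dots,f_n),\dots,g_n(f_1,\dots,f_n))$. The Jonquières (triangular) subgroup is $\mathcal{B}_n=\{f\in\mathrm{Aut}(\mathbb{A}^n_{\mathbb{C}}) : f_i\in\mathbb{C}[x_i,\dots,x_n] \text{ for all } i\}$, equivalently the automorphisms with $f_i=a_ix_i+p_i$, $a_i\in\mathbb{C}^*$, $p_i\in\mathbb{C}[x_{i+1},\dots,x_n]$. A group is solvable if some iterated derived subgroup is trivial. *)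

theory Defs
  imports Complex_Main "HOL-Algebra.Solvable_Groups"
begin

text \<open>Points of complex affine n-space: functions nat => complex vanishing
  at all indices >= n (coordinates x_0, ..., x_(n-1)).\<close>

inductive_set poly_fun :: "nat \<Rightarrow> ((nat \<Rightarrow> complex) \<Rightarrow> complex) set"
  for n :: nat where
  pf_const: "(\<lambda>p. c) \<in> poly_fun n"
| pf_var: "i < n \<Longrightarrow> (\<lambda>p. p i) \<in> poly_fun n"
| pf_add: "f \<in> poly_fun n \<Longrightarrow> g \<in> poly_fun n \<Longrightarrow> (\<lambda>p. f p + g p) \<in> poly_fun n"
| pf_mult: "f \<in> poly_fun n \<Longrightarrow> g \<in> poly_fun n \<Longrightarrow> (\<lambda>p. f p * g p) \<in> poly_fun n"

definition poly_map :: "nat \<Rightarrow> ((nat \<Rightarrow> complex) \<Rightarrow> (nat \<Rightarrow> complex)) set" where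
  "poly_map n = {F. (\<forall>i<n. (\<lambda>p. F p i) \<in> poly_fun n) \<and> (\<forall>p i. n \<le> i \<longrightarrow> F p i = 0)}"

definition aff_id :: "nat \<Rightarrow> (nat \<Rightarrow> complex) \<Rightarrow> (nat \<Rightarrow> complex)" where
  "aff_id n = (\<lambda>p i. if i < n then p i else 0)"

definition aut :: "nat \<Rightarrow> ((nat \<Rightarrow> complex) \<Rightarrow> (nat \<Rightarrow> complex)) set" where
  "aut n = {F \<in> poly_map n. \<exists>G \<in> poly_map n. G \<circ> F = aff_id n \<and> F \<circ> G = aff_id n}"

definition aut_group :: "nat \<Rightarrow> ((nat \<Rightarrow> complex) \<Rightarrow> (nat \<Rightarrow> complex)) monoid" where
  "aut_group n = \<lparr> carrier = aut n, mult = (\<lambda>g f. g \<circ> f), one = aff_id n \<rparr>"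

definition jonq :: "nat \<Rightarrow> ((nat \<Rightarrow> complex) \<Rightarrow> (nat \<Rightarrow> complex)) set" where
  "jonq n = {F \<in> aut n. \<forall>i<n. \<forall>p q. (\<forall>j. i \<le> j \<and> j < n \<longrightarrow> p j = q j) \<longrightarrow> F p i = F q i}"

end

theory Submission
  imports Defs "HOL-Analysis.Analysis"
begin

(* If H contained some g outside B_n, some partial derivative of a component g_i with respect
   to a variable x_j, j < i, would be nonzero at some point a.  The maps
   x |-> (g (a + t x) - g a) / t are conjugates of g by elements of B_n, hence lie in H for
   t <> 0, and they form a polynomial family whose value at t = 0 is the Jacobian matrix of g
   at a.  The values at t = 0 of polynomial families of automorphisms lying in H for t <> 0
   form a subgroup K containing H, and the k-th derived subgroup of K consists of such limits
   of families in the k-th derived subgroup of H; so K is solvable as well.  But K contains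
   the invertible upper triangular matrices together with a matrix that is not upper
   triangular, and elementary operations then produce a lower transvection in K.  With the
   upper ones it generates a copy of SL_2, which is perfect: a contradiction. *)

section \<open>Polynomial functions and polynomial maps\<close>

lemma poly_fun_cong: "f \<in> poly_fun n \<Longrightarrow> (\<And>k. k < n \<Longrightarrow> p k = q k) \<Longrightarrow> f p = f q"
  by (induction rule: poly_fun.induct) auto

lemma poly_fun_mono: "f \<in> poly_fun m \<Longrightarrow> m \<le> n \<Longrightarrow> f \<in> poly_fun n"
  by (induction rule: poly_fun.induct) (auto intro: poly_fun.intros)

lemma poly_fun_subst:
  "f \<in> poly_fun m \<Longrightarrow> (\<And>k. k < m \<Longrightarrow> \<sigma> k \<in> poly_fun n) \<Longrightarrow> (\<lambda>p. f (\<lambda>k. \<sigma> k p)) \<in> poly_fun n"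
proof (induction rule: poly_fun.induct)
  case (pf_var i) then show ?case by simp
qed (auto intro: poly_fun.intros)

lemma poly_fun_sum:
  "finite A \<Longrightarrow> (\<And>a. a \<in> A \<Longrightarrow> f a \<in> poly_fun n) \<Longrightarrow> (\<lambda>p. \<Sum>a\<in>A. f a p) \<in> poly_fun n"
  by (induction rule: finite_induct) (simp_all add: poly_fun.pf_const poly_fun.pf_add)

lemma continuous_on_poly_fun_upd: "f \<in> poly_fun n \<Longrightarrow> continuous_on UNIV (\<lambda>t. f (p(k := t)))"
proof (induction rule: poly_fun.induct)
  case (pf_var i) then show ?case by (cases "i = k") (auto intro: continuous_intros)
qed (auto intro: continuous_intros)

lemma poly_mapI:
  "(\<And>i. i < n \<Longrightarrow> (\<lambda>p. F p i) \<in> poly_fun n) \<Longrightarrow> (\<And>p i. n \<le> i \<Longrightarrow> F p i = 0) \<Longrightarrow> F \<in> poly_map n"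
  unfolding poly_map_def by auto

lemma poly_map_component: "F \<in> poly_map n \<Longrightarrow> i < n \<Longrightarrow> (\<lambda>p. F p i) \<in> poly_fun n"
  unfolding poly_map_def by auto

lemma poly_map_outside: "F \<in> poly_map n \<Longrightarrow> n \<le> i \<Longrightarrow> F p i = 0"
  unfolding poly_map_def by auto

lemma poly_map_cong:
  assumes "F \<in> poly_map n" "\<And>k. k < n \<Longrightarrow> p k = q k"
  shows "F p = F q"
proof
  fix i show "F p i = F q i"
    using poly_fun_cong[OF poly_map_component[OF assms(1)] assms(2)] poly_map_outside[OF assms(1)]
    by (cases "i < n") auto
qed

lemma poly_map_comp:
  assumes "F \<in> poly_map n" "G \<in> poly_map n"
  shows "G \<circ> F \<in> poly_map n"
proof (rule poly_mapI)
  fix i assume "i < n"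
  then have "(\<lambda>p. (\<lambda>q. G q i) (\<lambda>k. F p k)) \<in> poly_fun n"
    by (rule poly_fun_subst[OF poly_map_component[OF assms(2)] poly_map_component[OF assms(1)]])
  then show "(\<lambda>p. (G \<circ> F) p i) \<in> poly_fun n" by simp
qed (simp add: poly_map_outside[OF assms(2)])

lemma aff_id_poly_map: "aff_id n \<in> poly_map n"
  unfolding poly_map_def aff_id_def by (auto intro: poly_fun.intros)

lemma aff_id_comp_poly_map: "F \<in> poly_map n \<Longrightarrow> aff_id n \<circ> F = F"
  by (auto simp: poly_map_def aff_id_def fun_eq_iff)

lemma poly_map_aff_id_cong: "F \<in> poly_map n \<Longrightarrow> F (aff_id n p) = F p"
  by (rule poly_map_cong) (auto simp: aff_id_def)

lemma poly_map_comp_aff_id: "F \<in> poly_map n \<Longrightarrow> F \<circ> aff_id n = F"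
  by (simp add: fun_eq_iff poly_map_aff_id_cong)

lemma aut_group_simps [simp]:
  "carrier (aut_group n) = aut n" "monoid.mult (aut_group n) = (\<lambda>g f. g \<circ> f)"
  "one (aut_group n) = aff_id n"
  by (simp_all add: aut_group_def)

lemma aut_imp_poly_map: "F \<in> aut n \<Longrightarrow> F \<in> poly_map n"
  by (simp add: aut_def)

lemma autI:
  "F \<in> poly_map n \<Longrightarrow> G \<in> poly_map n \<Longrightarrow> G \<circ> F = aff_id n \<Longrightarrow> F \<circ> G = aff_id n \<Longrightarrow> F \<in> aut n"
  unfolding aut_def by blast

lemma comp_inverses:
  assumes "F \<in> poly_map n" "F' \<in> poly_map n" "F' \<circ> F = aff_id n" "F \<circ> F' = aff_id n"
    and "G \<in> poly_map n" "G' \<in> poly_map n" "G' \<circ> G = aff_id n" "G \<circ> G' = aff_id n"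
  shows "(G' \<circ> F') \<circ> (F \<circ> G) = aff_id n" "(F \<circ> G) \<circ> (G' \<circ> F') = aff_id n"
proof -
  have "(G' \<circ> F') \<circ> (F \<circ> G) = G' \<circ> ((F' \<circ> F) \<circ> G)" by (simp add: comp_assoc)
  then show "(G' \<circ> F') \<circ> (F \<circ> G) = aff_id n" using assms by (simp add: aff_id_comp_poly_map)
  have "(F \<circ> G) \<circ> (G' \<circ> F') = F \<circ> ((G \<circ> G') \<circ> F')" by (simp add: comp_assoc)
  then show "(F \<circ> G) \<circ> (G' \<circ> F') = aff_id n" using assms by (simp add: aff_id_comp_poly_map)
qed

lemma group_aut_group: "group (aut_group n)"
proof (rule groupI)
  fix F G assume "F \<in> carrier (aut_group n)" "G \<in> carrier (aut_group n)"
  then obtain F' G' where "F \<in> poly_map n" "F' \<in> poly_map n" "F' \<circ> F = aff_id n" "F \<circ> F' = aff_id n"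
    and "G \<in> poly_map n" "G' \<in> poly_map n" "G' \<circ> G = aff_id n" "G \<circ> G' = aff_id n"
    by (auto simp: aut_def)
  then show "F \<otimes>\<^bsub>aut_group n\<^esub> G \<in> carrier (aut_group n)"
    by (simp add: autI[of _ _ "G' \<circ> F'"] poly_map_comp comp_inverses)
next
  fix F assume "F \<in> carrier (aut_group n)"
  then obtain F' where "F \<in> poly_map n" "F' \<in> poly_map n" "F' \<circ> F = aff_id n" "F \<circ> F' = aff_id n"
    by (auto simp: aut_def)
  then have "F' \<in> aut n" by (intro autI)
  then show "\<exists>G\<in>carrier (aut_group n). G \<otimes>\<^bsub>aut_group n\<^esub> F = \<one>\<^bsub>aut_group n\<^esub>"
    using \<open>F' \<circ> F = aff_id n\<close> by auto
next
  show "\<one>\<^bsub>aut_group n\<^esub> \<in> carrier (aut_group n)"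
    using autI[OF aff_id_poly_map aff_id_poly_map] aff_id_comp_poly_map[OF aff_id_poly_map] by simp
next
  fix F assume "F \<in> carrier (aut_group n)"
  then show "\<one>\<^bsub>aut_group n\<^esub> \<otimes>\<^bsub>aut_group n\<^esub> F = F"
    by (simp add: aff_id_comp_poly_map aut_imp_poly_map)
qed (simp add: comp_assoc)

lemma aut_group_inv_eq:
  assumes "F \<in> aut n" "F' \<in> poly_map n" "F' \<circ> F = aff_id n"
  shows "inv\<^bsub>aut_group n\<^esub> F = F'"
proof -
  obtain G where G: "G \<in> poly_map n" "G \<circ> F = aff_id n" "F \<circ> G = aff_id n"
    using assms(1) by (auto simp: aut_def)
  have "F' = F' \<circ> (F \<circ> G)" using G assms(2) by (simp add: poly_map_comp_aff_id)
  also have "\<dots> = (F' \<circ> F) \<circ> G" by (simp add: comp_assoc)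
  also have "\<dots> = G" using G assms(3) by (simp add: aff_id_comp_poly_map)
  finally have "F' \<in> aut n" using G autI[OF G(1) aut_imp_poly_map[OF assms(1)]] by simp
  then show ?thesis using group.inv_equality[OF group_aut_group] assms by simp
qed


section \<open>First-order expansion and partial derivatives\<close>

definition unit_vec :: "nat \<Rightarrow> nat \<Rightarrow> complex" where
  "unit_vec k = (\<lambda>m. if m = k then 1 else 0)"

definition partial_deriv :: "((nat \<Rightarrow> complex) \<Rightarrow> complex) \<Rightarrow> (nat \<Rightarrow> complex) \<Rightarrow> nat \<Rightarrow> complex" where
  "partial_deriv f a k = deriv (\<lambda>t. f (\<lambda>m. a m + t * unit_vec k m)) 0"

lemma sum_unit_vec:
  "j < n \<Longrightarrow> (\<Sum>k<n. c k * unit_vec j k) = c j"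
  "j < n \<Longrightarrow> (\<Sum>k<n. c k * unit_vec k j) = c j"
  by (simp_all add: unit_vec_def if_distrib cong: if_cong)

lemma sum_lessThan_fun_upd: "(\<Sum>k<n. c k * (q(n := t)) k) = (\<Sum>k<(n::nat). c k * q k)"
  by (rule sum.cong) auto

text \<open>The coordinate \<open>q n\<close> plays the role of the increment \<open>t\<close>:
  \<open>f (a + t q) = f a + t f' (q, t)\<close>, and \<open>f' (q, 0) = c \<cdot> q\<close>.\<close>
definition first_order_expansion :: "nat \<Rightarrow> ((nat \<Rightarrow> complex) \<Rightarrow> complex) \<Rightarrow> (nat \<Rightarrow> complex)
    \<Rightarrow> ((nat \<Rightarrow> complex) \<Rightarrow> complex) \<Rightarrow> (nat \<Rightarrow> complex) \<Rightarrow> bool" where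
  "first_order_expansion n f a f' c \<longleftrightarrow> f' \<in> poly_fun (Suc n)
     \<and> (\<forall>q. f (\<lambda>k. a k + q n * q k) = f a + q n * f' q)
     \<and> (\<forall>q. q n = 0 \<longrightarrow> f' q = (\<Sum>k<n. c k * q k))"

lemma poly_fun_first_order_expansion:
  "f \<in> poly_fun n \<Longrightarrow> \<exists>f' c. first_order_expansion n f a f' c"
proof (induction rule: poly_fun.induct)
  case (pf_const c0)
  show ?case
    by (intro exI[of _ "\<lambda>q. 0"] exI[of _ "\<lambda>k. 0"]) (simp add: first_order_expansion_def poly_fun.pf_const)
next
  case (pf_var i)
  have "(\<lambda>q. q i) \<in> poly_fun (Suc n)" using pf_var by (auto intro: poly_fun.pf_var)
  moreover have "q i = (\<Sum>k<n. unit_vec i k * q k)" for q :: "nat \<Rightarrow> complex"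
    using sum_unit_vec(1)[OF pf_var, of q] by (simp add: mult.commute)
  ultimately show ?case
    by (intro exI[of _ "\<lambda>q. q i"] exI[of _ "unit_vec i"]) (simp add: first_order_expansion_def)
next
  case (pf_add f g)
  then obtain f' c g' d where "first_order_expansion n f a f' c" "first_order_expansion n g a g' d"
    by blast
  then show ?case
    by (intro exI[of _ "\<lambda>q. f' q + g' q"] exI[of _ "\<lambda>k. c k + d k"])
      (auto intro: poly_fun.pf_add simp: first_order_expansion_def algebra_simps sum.distrib)
next
  case (pf_mult f g)
  then obtain f' c g' d where f': "first_order_expansion n f a f' c"
    and g': "first_order_expansion n g a g' d"
    by blast
  then have "(\<lambda>q. f a * g' q + g a * f' q + q n * (f' q * g' q)) \<in> poly_fun (Suc n)"
    unfolding first_order_expansion_def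
    by (intro poly_fun.pf_add poly_fun.pf_mult poly_fun.pf_const poly_fun.pf_var) auto
  with f' g' show ?case
    by (intro exI[of _ "\<lambda>q. f a * g' q + g a * f' q + q n * (f' q * g' q)"]
        exI[of _ "\<lambda>k. f a * d k + g a * c k"])
      (auto simp: first_order_expansion_def algebra_simps sum.distrib sum_distrib_left)
qed

lemma first_order_expansion_has_field_derivative:
  assumes f: "f \<in> poly_fun n" and expansion: "first_order_expansion n f a f' c"
    and j: "j < n" and a: "a = (\<lambda>m. x m + s * unit_vec j m)"
  shows "((\<lambda>t. f (\<lambda>m. x m + t * unit_vec j m)) has_field_derivative c j) (at s)"
proof -
  define g where "g z = f' ((unit_vec j)(n := z - s))" for z
  have "f (\<lambda>m. x m + z * unit_vec j m) - f (\<lambda>m. x m + s * unit_vec j m) = g z * (z - s)" for z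
  proof -
    let ?q = "(unit_vec j)(n := z - s)"
    have "f (\<lambda>m. x m + z * unit_vec j m) = f (\<lambda>k. a k + ?q n * ?q k)"
      by (rule poly_fun_cong[OF f]) (auto simp: a algebra_simps)
    also have "\<dots> = f a + ?q n * f' ?q"
      using expansion unfolding first_order_expansion_def by blast
    finally show ?thesis by (simp add: a g_def algebra_simps)
  qed
  moreover have "continuous_on UNIV g"
    unfolding g_def using expansion unfolding first_order_expansion_def
    by (intro continuous_on_compose2[OF continuous_on_poly_fun_upd, of _ "Suc n" UNIV "\<lambda>z. z - s"])
      (auto intro: continuous_intros)
  moreover have "g s = c j"
    using expansion sum_unit_vec(1)[OF j, of c]
    by (simp add: g_def first_order_expansion_def sum_lessThan_fun_upd)
  ultimately show ?thesis
    unfolding CARAT_DERIV using continuous_on_eq_continuous_at[of UNIV g] by blast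
qed

lemma first_order_expansion_partial_deriv:
  assumes "f \<in> poly_fun n" "first_order_expansion n f a f' c" "k < n"
  shows "c k = partial_deriv f a k"
proof -
  have "((\<lambda>t. f (\<lambda>m. a m + t * unit_vec k m)) has_field_derivative c k) (at 0)"
    by (rule first_order_expansion_has_field_derivative[OF assms]) simp
  then show ?thesis unfolding partial_deriv_def by (simp add: DERIV_imp_deriv)
qed

lemma poly_fun_first_order_expansion_partial_deriv:
  assumes "f \<in> poly_fun n"
  shows "\<exists>f'. first_order_expansion n f a f' (partial_deriv f a)"
proof -
  obtain f' c where expansion: "first_order_expansion n f a f' c"
    using poly_fun_first_order_expansion[OF assms] by blast
  then have "(\<Sum>k<n. c k * q k) = (\<Sum>k<n. partial_deriv f a k * q k)" for q
    using first_order_expansion_partial_deriv[OF assms expansion] by (intro sum.cong) auto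
  then show ?thesis using expansion unfolding first_order_expansion_def by auto
qed

lemma poly_fun_translate_const:
  assumes f: "f \<in> poly_fun n" and j: "j < n" and partial_zero: "\<And>a. partial_deriv f a j = 0"
  shows "f (\<lambda>m. x m + t * unit_vec j m) = f x"
proof -
  have "((\<lambda>t. f (\<lambda>m. x m + t * unit_vec j m)) has_field_derivative 0) (at s)" for s
  proof -
    define a where "a = (\<lambda>m. x m + s * unit_vec j m)"
    obtain f' c where expansion: "first_order_expansion n f a f' c"
      using poly_fun_first_order_expansion[OF f] by blast
    have "c j = 0" using first_order_expansion_partial_deriv[OF f expansion j] partial_zero by simp
    then show ?thesis using first_order_expansion_has_field_derivative[OF f expansion j a_def] by simp
  qed
  then obtain c where "\<forall>t\<in>UNIV. f (\<lambda>m. x m + t * unit_vec j m) = c"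
    using has_field_derivative_zero_constant[of UNIV "\<lambda>t. f (\<lambda>m. x m + t * unit_vec j m)"] by auto
  then have "f (\<lambda>m. x m + t * unit_vec j m) = c" "f (\<lambda>m. x m + 0 * unit_vec j m) = c" by blast+
  then show ?thesis by simp
qed

lemma jonqI_partial_deriv:
  assumes g: "g \<in> aut n"
    and partial_zero: "\<And>a i j. j < i \<Longrightarrow> i < n \<Longrightarrow> partial_deriv (\<lambda>p. g p i) a j = 0"
  shows "g \<in> jonq n"
  unfolding jonq_def
proof (safe intro!: g)
  fix i and p q :: "nat \<Rightarrow> complex"
  assume i: "i < n" and pq: "\<forall>j. i \<le> j \<and> j < n \<longrightarrow> p j = q j"
  have gi: "(\<lambda>p. g p i) \<in> poly_fun n" using poly_map_component[OF aut_imp_poly_map[OF g] i] .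
  \<comment> \<open>replace the coordinates of \<open>p\<close> below \<open>i\<close> by those of \<open>q\<close> one at a time\<close>
  define r where "r m = (\<lambda>k. if k < m then q k else p k)" for m
  have "g (r m) i = g p i" if "m \<le> i" for m
    using that
  proof (induction m)
    case (Suc m)
    have "r (Suc m) = (\<lambda>k. r m k + (q m - p m) * unit_vec m k)"
      by (auto simp: r_def unit_vec_def fun_eq_iff less_Suc_eq)
    then show ?case
      using poly_fun_translate_const[OF gi, of m "r m" "q m - p m"] partial_zero Suc i by simp
  qed (simp add: r_def)
  moreover have "g (r i) i = g q i" by (rule poly_fun_cong[OF gi]) (use pq in \<open>auto simp: r_def\<close>)
  ultimately show "g p i = g q i" by simp
qed


section \<open>Affine and linear maps in the Jonquieres group\<close>

definition homothety :: "nat \<Rightarrow> complex \<Rightarrow> (nat \<Rightarrow> complex) \<Rightarrow> nat \<Rightarrow> complex" where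
  "homothety n c = (\<lambda>p i. if i < n then c * p i else 0)"

definition translation :: "nat \<Rightarrow> (nat \<Rightarrow> complex) \<Rightarrow> (nat \<Rightarrow> complex) \<Rightarrow> nat \<Rightarrow> complex" where
  "translation n a = (\<lambda>p i. if i < n then p i + a i else 0)"

definition dilation :: "nat \<Rightarrow> nat \<Rightarrow> complex \<Rightarrow> (nat \<Rightarrow> complex) \<Rightarrow> nat \<Rightarrow> complex" where
  "dilation n r c = (\<lambda>p k. if k < n then (if k = r then c * p k else p k) else 0)"

definition transvection :: "nat \<Rightarrow> nat \<Rightarrow> nat \<Rightarrow> complex \<Rightarrow> (nat \<Rightarrow> complex) \<Rightarrow> nat \<Rightarrow> complex" where
  "transvection n a b s = (\<lambda>p k. if k < n then (if k = a then p a + s * p b else p k) else 0)"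

definition column_transvection ::
    "nat \<Rightarrow> nat \<Rightarrow> (nat \<Rightarrow> complex) \<Rightarrow> (nat \<Rightarrow> complex) \<Rightarrow> nat \<Rightarrow> complex" where
  "column_transvection n j x = (\<lambda>p k. if k < n then p k + x k * p j else 0)"

definition row_transvection ::
    "nat \<Rightarrow> nat \<Rightarrow> (nat \<Rightarrow> complex) \<Rightarrow> (nat \<Rightarrow> complex) \<Rightarrow> nat \<Rightarrow> complex" where
  "row_transvection n j w = (\<lambda>p k. if k < n then (if k = j then p j + (\<Sum>s<n. w s * p s) else p k) else 0)"

definition mat_map :: "nat \<Rightarrow> (nat \<Rightarrow> nat \<Rightarrow> complex) \<Rightarrow> (nat \<Rightarrow> complex) \<Rightarrow> nat \<Rightarrow> complex" where
  "mat_map n C = (\<lambda>x i. if i < n then (\<Sum>k<n. C i k * x k) else 0)"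

lemma homothety_poly_map: "homothety n c \<in> poly_map n"
  unfolding homothety_def poly_map_def by (auto intro!: poly_fun.intros)

lemma translation_poly_map: "translation n a \<in> poly_map n"
  unfolding translation_def poly_map_def by (auto intro!: poly_fun.intros)

lemma dilation_poly_map: "dilation n r c \<in> poly_map n"
proof (rule poly_mapI)
  fix i assume "i < n" then show "(\<lambda>p. dilation n r c p i) \<in> poly_fun n"
    by (cases "i = r") (auto simp: dilation_def intro!: poly_fun.intros)
qed (simp add: dilation_def)

lemma transvection_poly_map: "b < n \<Longrightarrow> transvection n a b s \<in> poly_map n"
proof (rule poly_mapI)
  fix i assume "b < n" "i < n" then show "(\<lambda>p. transvection n a b s p i) \<in> poly_fun n"
    by (cases "i = a") (auto simp: transvection_def intro!: poly_fun.intros)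
qed (simp add: transvection_def)

lemma column_transvection_poly_map: "j < n \<Longrightarrow> column_transvection n j x \<in> poly_map n"
  by (rule poly_mapI) (auto simp: column_transvection_def intro!: poly_fun.intros)

lemma row_transvection_poly_map: "row_transvection n j w \<in> poly_map n"
proof (rule poly_mapI)
  fix i assume "i < n" then show "(\<lambda>p. row_transvection n j w p i) \<in> poly_fun n"
    by (cases "i = j") (auto simp: row_transvection_def intro!: poly_fun.intros poly_fun_sum)
qed (simp add: row_transvection_def)

lemma jonqI:
  assumes "F \<in> poly_map n" "G \<in> poly_map n" "G \<circ> F = aff_id n" "F \<circ> G = aff_id n"
    and "\<And>i p q. i < n \<Longrightarrow> (\<forall>j. i \<le> j \<and> j < n \<longrightarrow> p j = q j) \<Longrightarrow> F p i = F q i"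
  shows "F \<in> jonq n"
  using assms unfolding jonq_def aut_def by blast

lemma homothety_jonq: "c \<noteq> 0 \<Longrightarrow> homothety n c \<in> jonq n"
  by (rule jonqI[OF homothety_poly_map homothety_poly_map[of n "1/c"]])
    (auto simp: homothety_def aff_id_def fun_eq_iff)

lemma translation_jonq: "translation n a \<in> jonq n"
  by (rule jonqI[OF translation_poly_map translation_poly_map[of n "\<lambda>i. - a i"]])
    (auto simp: translation_def aff_id_def fun_eq_iff)

lemma dilation_jonq: "c \<noteq> 0 \<Longrightarrow> dilation n r c \<in> jonq n"
  by (rule jonqI[OF dilation_poly_map dilation_poly_map[of n r "1/c"]])
    (auto simp: dilation_def aff_id_def fun_eq_iff)

lemma transvection_inverse:
  "a \<noteq> b \<Longrightarrow> b < n \<Longrightarrow> transvection n a b (- s) \<circ> transvection n a b s = aff_id n"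
  by (auto simp: transvection_def aff_id_def fun_eq_iff)

lemma transvection_ne_aff_id:
  assumes "a \<noteq> b" "a < n" "b < n" "s \<noteq> 0"
  shows "transvection n a b s \<noteq> aff_id n"
proof
  assume "transvection n a b s = aff_id n"
  then have "transvection n a b s (unit_vec b) a = aff_id n (unit_vec b) a" by simp
  then show False using assms by (simp add: transvection_def aff_id_def unit_vec_def)
qed

lemma transvection_jonq: "a < b \<Longrightarrow> b < n \<Longrightarrow> transvection n a b s \<in> jonq n"
  by (rule jonqI[OF transvection_poly_map transvection_poly_map[of b n a "- s"]])
    (auto simp: transvection_def aff_id_def fun_eq_iff)

lemma column_transvection_inverse:
  "j < n \<Longrightarrow> x j = 0 \<Longrightarrow> column_transvection n j (\<lambda>k. - x k) \<circ> column_transvection n j x = aff_id n"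
  by (auto simp: column_transvection_def aff_id_def fun_eq_iff algebra_simps)

lemma row_transvection_jonq:
  assumes w: "\<And>s. s \<le> j \<Longrightarrow> w s = 0"
  shows "row_transvection n j w \<in> jonq n"
proof (rule jonqI[OF row_transvection_poly_map row_transvection_poly_map[of n j "\<lambda>s. - w s"]])
  have unchanged: "(\<Sum>s<n. v s * row_transvection n j w' p s) = (\<Sum>s<n. v s * p s)" if "v j = 0" for v w' p
    by (rule sum.cong) (auto simp: row_transvection_def that)
  show "row_transvection n j (\<lambda>s. - w s) \<circ> row_transvection n j w = aff_id n"
    using unchanged[of "\<lambda>s. - w s"] w
    by (auto simp: fun_eq_iff aff_id_def row_transvection_def sum_negf)
  show "row_transvection n j w \<circ> row_transvection n j (\<lambda>s. - w s) = aff_id n"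
    using unchanged[of w] w by (auto simp: fun_eq_iff aff_id_def row_transvection_def sum_negf)
next
  fix i and p q :: "nat \<Rightarrow> complex"
  assume "i < n" and pq: "\<forall>k. i \<le> k \<and> k < n \<longrightarrow> p k = q k"
  have "w s * p s = w s * q s" if "i = j" "s < n" for s
    using w[of s] pq that by (cases "j \<le> s") auto
  then have "(\<Sum>s<n. w s * p s) = (\<Sum>s<n. w s * q s)" if "i = j"
    using that by (intro sum.cong) auto
  then show "row_transvection n j w p i = row_transvection n j w q i"
    using pq \<open>i < n\<close> by (auto simp: row_transvection_def)
qed

definition linear_endo :: "((nat \<Rightarrow> complex) \<Rightarrow> nat \<Rightarrow> complex) \<Rightarrow> bool" where
  "linear_endo F \<longleftrightarrow> (\<forall>p q c. F (\<lambda>k. p k + c * q k) = (\<lambda>k. F p k + c * F q k))"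

lemma linear_endoD: "linear_endo F \<Longrightarrow> F (\<lambda>k. p k + c * q k) = (\<lambda>k. F p k + c * F q k)"
  by (simp add: linear_endo_def)

lemma linear_endo_comp: "linear_endo F \<Longrightarrow> linear_endo G \<Longrightarrow> linear_endo (F \<circ> G)"
  unfolding linear_endo_def by simp

lemma linear_endo_zero: "linear_endo F \<Longrightarrow> F (\<lambda>k. 0) = (\<lambda>k. 0)"
  using linear_endoD[of F "\<lambda>k. 0" 1 "\<lambda>k. 0"] by (simp add: fun_eq_iff)

lemma linear_endo_sum:
  assumes "linear_endo F" "finite A"
  shows "F (\<lambda>k. \<Sum>a\<in>A. l a * y a k) = (\<lambda>k. \<Sum>a\<in>A. l a * F (y a) k)"
  using assms(2)
proof (induction rule: finite_induct)
  case empty then show ?case using linear_endo_zero[OF assms(1)] by simp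
next
  case (insert x A)
  then show ?case
    using linear_endoD[OF assms(1), of "\<lambda>k. \<Sum>a\<in>A. l a * y a k" "l x" "y x"] by (simp add: add.commute)
qed

lemma linear_endo_aut_inv:
  assumes "F \<in> aut n" "linear_endo F"
  shows "linear_endo (inv\<^bsub>aut_group n\<^esub> F)"
  unfolding linear_endo_def
proof (intro allI)
  fix p q c
  let ?F' = "inv\<^bsub>aut_group n\<^esub> F"
  have F': "?F' \<in> poly_map n" "F \<circ> ?F' = aff_id n" "?F' \<circ> F = aff_id n"
    using group.inv_closed[OF group_aut_group] group.r_inv[OF group_aut_group]
      group.l_inv[OF group_aut_group] assms(1)
    by (auto simp: aut_imp_poly_map)
  define v where "v = (\<lambda>k. ?F' p k + c * ?F' q k)"
  have "F v = (\<lambda>k. F (?F' p) k + c * F (?F' q) k)" using linear_endoD[OF assms(2)] by (simp add: v_def)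
  also have "\<dots> = aff_id n (\<lambda>k. p k + c * q k)"
    using F'(2) by (auto simp: fun_eq_iff aff_id_def dest: fun_cong)
  finally have "?F' (F v) = ?F' (\<lambda>k. p k + c * q k)" using poly_map_aff_id_cong[OF F'(1)] by simp
  moreover have "?F' (F v) = v"
    using F' by (auto simp: fun_eq_iff v_def aff_id_def poly_map_outside dest: fun_cong[of _ _ "F v"])
  ultimately show "?F' (\<lambda>k. p k + c * q k) = (\<lambda>k. ?F' p k + c * ?F' q k)" by (simp add: v_def)
qed

lemma linear_endo_mat_map: "linear_endo (mat_map n C)"
  unfolding linear_endo_def mat_map_def
  by (auto simp: fun_eq_iff sum.distrib sum_distrib_left algebra_simps)

lemma linear_endo_row_transvection: "linear_endo (row_transvection n j w)"
  unfolding linear_endo_def row_transvection_def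
  by (auto simp: fun_eq_iff sum.distrib sum_distrib_left algebra_simps)


section \<open>Degenerations of subgroups\<close>

text \<open>The parameter \<open>t\<close> of a family is carried as the extra coordinate \<open>x\<^sub>n\<close>, so that the
  family is polynomial jointly in \<open>(x, t)\<close>.\<close>
definition poly_family :: "nat \<Rightarrow> (complex \<Rightarrow> (nat \<Rightarrow> complex) \<Rightarrow> nat \<Rightarrow> complex) \<Rightarrow> bool" where
  "poly_family n \<Phi> \<longleftrightarrow> (\<forall>t. \<Phi> t \<in> poly_map n) \<and> (\<forall>i<n. (\<lambda>p. \<Phi> (p n) p i) \<in> poly_fun (Suc n))"

lemma poly_family_const: "F \<in> poly_map n \<Longrightarrow> poly_family n (\<lambda>t. F)"
  unfolding poly_family_def poly_map_def by (auto intro: poly_fun_mono)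

lemma poly_family_comp:
  assumes "poly_family n \<Phi>" "poly_family n \<Psi>"
  shows "poly_family n (\<lambda>t. \<Phi> t \<circ> \<Psi> t)"
  unfolding poly_family_def
proof (intro conjI allI impI)
  show "\<Phi> t \<circ> \<Psi> t \<in> poly_map n" for t
    using assms by (auto simp: poly_family_def intro: poly_map_comp)
  fix i assume i: "i < n"
  define \<sigma> where "\<sigma> k = (if k = n then (\<lambda>p. p n) else (\<lambda>p. \<Psi> (p n) p k))" for k
  have "(\<lambda>p. (\<lambda>q. \<Phi> (q n) q i) (\<lambda>k. \<sigma> k p)) \<in> poly_fun (Suc n)"
    by (rule poly_fun_subst) (use assms i in \<open>auto simp: poly_family_def \<sigma>_def intro: poly_fun.pf_var\<close>)
  moreover have "\<Phi> (p n) (\<lambda>k. \<sigma> k p) = \<Phi> (p n) (\<Psi> (p n) p)" for p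
    by (rule poly_map_cong[of _ n]) (use assms in \<open>auto simp: poly_family_def \<sigma>_def\<close>)
  ultimately show "(\<lambda>p. (\<Phi> (p n) \<circ> \<Psi> (p n)) p i) \<in> poly_fun (Suc n)" by (simp add: \<sigma>_def)
qed

lemma poly_family_eq_aff_id_at_0:
  assumes "poly_family n \<Phi>" "\<And>t. t \<noteq> 0 \<Longrightarrow> \<Phi> t = aff_id n"
  shows "\<Phi> 0 = aff_id n"
proof (intro ext)
  fix p i
  show "\<Phi> 0 p i = aff_id n p i"
  proof (cases "i < n")
    case False then show ?thesis
      using poly_map_outside[of "\<Phi> 0" n i p] assms(1) by (simp add: poly_family_def aff_id_def)
  next
    case True
    define h where "h t = (\<lambda>q. \<Phi> (q n) q i) (p(n := t))" for t
    have h: "h t = \<Phi> t p i" for t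
      using poly_map_cong[of "\<Phi> t" n "p(n := t)" p] assms(1) by (auto simp: h_def poly_family_def)
    have "continuous_on UNIV h" unfolding h_def
      by (rule continuous_on_poly_fun_upd) (use assms(1) True in \<open>auto simp: poly_family_def\<close>)
    then have "h \<midarrow>0\<rightarrow> h 0" by (simp add: continuous_on_eq_continuous_at isCont_def)
    moreover have "h \<midarrow>0\<rightarrow> p i"
      using LIM_equal[of 0 h "\<lambda>t. p i" "p i"] assms(2) True by (auto simp: h aff_id_def)
    ultimately show ?thesis using LIM_unique h True by (fastforce simp: aff_id_def)
  qed
qed

definition families :: "nat \<Rightarrow> ((nat \<Rightarrow> complex) \<Rightarrow> nat \<Rightarrow> complex) set
    \<Rightarrow> (complex \<Rightarrow> (nat \<Rightarrow> complex) \<Rightarrow> nat \<Rightarrow> complex) set" where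
  "families n S = {\<Phi>. poly_family n \<Phi>
     \<and> (\<exists>\<Psi>. poly_family n \<Psi> \<and> (\<forall>t. t \<noteq> 0 \<longrightarrow> \<Psi> t \<circ> \<Phi> t = aff_id n \<and> \<Phi> t \<circ> \<Psi> t = aff_id n))
     \<and> (\<forall>t. t \<noteq> 0 \<longrightarrow> \<Phi> t \<in> S)}"

definition degenerations :: "nat \<Rightarrow> ((nat \<Rightarrow> complex) \<Rightarrow> nat \<Rightarrow> complex) set
    \<Rightarrow> ((nat \<Rightarrow> complex) \<Rightarrow> nat \<Rightarrow> complex) set" where
  "degenerations n S = (\<lambda>\<Phi>. \<Phi> 0) ` families n S"

lemma poly_family_inverse_at_0:
  assumes "poly_family n \<Phi>" "poly_family n \<Psi>"
    and "\<forall>t. t \<noteq> 0 \<longrightarrow> \<Psi> t \<circ> \<Phi> t = aff_id n \<and> \<Phi> t \<circ> \<Psi> t = aff_id n"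
  shows "\<Psi> t \<circ> \<Phi> t = aff_id n \<and> \<Phi> t \<circ> \<Psi> t = aff_id n"
proof (cases "t = 0")
  case True
  have "(\<lambda>t. \<Psi> t \<circ> \<Phi> t) 0 = aff_id n"
    by (rule poly_family_eq_aff_id_at_0[OF poly_family_comp[OF assms(2,1)]]) (use assms(3) in auto)
  moreover have "(\<lambda>t. \<Phi> t \<circ> \<Psi> t) 0 = aff_id n"
    by (rule poly_family_eq_aff_id_at_0[OF poly_family_comp[OF assms(1,2)]]) (use assms(3) in auto)
  ultimately show ?thesis using True by simp
qed (use assms in auto)

lemma families_inverse:
  assumes "\<Phi> \<in> families n S" "subgroup S (aut_group n)"
  shows "\<exists>\<Psi> \<in> families n S. \<forall>t. \<Phi> t \<in> aut n \<and> inv\<^bsub>aut_group n\<^esub> (\<Phi> t) = \<Psi> t"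
proof -
  obtain \<Psi> where P: "poly_family n \<Phi>" "poly_family n \<Psi>"
    "\<forall>t. t \<noteq> 0 \<longrightarrow> \<Psi> t \<circ> \<Phi> t = aff_id n \<and> \<Phi> t \<circ> \<Psi> t = aff_id n"
    and S: "\<forall>t. t \<noteq> 0 \<longrightarrow> \<Phi> t \<in> S" using assms(1) by (auto simp: families_def)
  have inverse: "\<Psi> t \<circ> \<Phi> t = aff_id n" "\<Phi> t \<circ> \<Psi> t = aff_id n" for t
    using poly_family_inverse_at_0[OF P] by auto
  have pm: "\<Phi> t \<in> poly_map n" "\<Psi> t \<in> poly_map n" for t using P by (auto simp: poly_family_def)
  have aut: "\<Phi> t \<in> aut n" for t by (rule autI[OF pm inverse])
  have inv: "inv\<^bsub>aut_group n\<^esub> (\<Phi> t) = \<Psi> t" for t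
    by (rule aut_group_inv_eq[OF aut pm(2) inverse(1)])
  have "\<Psi> t \<in> S" if "t \<noteq> 0" for t
    using inv[of t] subgroup.m_inv_closed[OF assms(2), of "\<Phi> t"] S that by simp
  then have "\<Psi> \<in> families n S" unfolding families_def using P inverse by blast
  then show ?thesis using inv aut by blast
qed

lemma families_comp:
  assumes "\<Phi> \<in> families n S" "\<Phi>' \<in> families n S" "subgroup S (aut_group n)"
  shows "(\<lambda>t. \<Phi> t \<circ> \<Phi>' t) \<in> families n S"
proof -
  obtain \<Psi> where P: "poly_family n \<Phi>" "poly_family n \<Psi>"
    "\<forall>t. t \<noteq> 0 \<longrightarrow> \<Psi> t \<circ> \<Phi> t = aff_id n \<and> \<Phi> t \<circ> \<Psi> t = aff_id n"
    and S: "\<forall>t. t \<noteq> 0 \<longrightarrow> \<Phi> t \<in> S" using assms(1) by (auto simp: families_def)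
  obtain \<Psi>' where P': "poly_family n \<Phi>'" "poly_family n \<Psi>'"
    "\<forall>t. t \<noteq> 0 \<longrightarrow> \<Psi>' t \<circ> \<Phi>' t = aff_id n \<and> \<Phi>' t \<circ> \<Psi>' t = aff_id n"
    and S': "\<forall>t. t \<noteq> 0 \<longrightarrow> \<Phi>' t \<in> S" using assms(2) by (auto simp: families_def)
  have "(\<Psi>' t \<circ> \<Psi> t) \<circ> (\<Phi> t \<circ> \<Phi>' t) = aff_id n \<and> (\<Phi> t \<circ> \<Phi>' t) \<circ> (\<Psi>' t \<circ> \<Psi> t) = aff_id n"
    if "t \<noteq> 0" for t
    using comp_inverses[of "\<Phi> t" n "\<Psi> t" "\<Phi>' t" "\<Psi>' t"] P P' that
    by (auto simp: poly_family_def)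
  moreover have "\<Phi> t \<circ> \<Phi>' t \<in> S" if "t \<noteq> 0" for t
    using subgroup.m_closed[OF assms(3), of "\<Phi> t" "\<Phi>' t"] S S' that by simp
  ultimately show ?thesis
    unfolding families_def using poly_family_comp[OF P(1) P'(1)] poly_family_comp[OF P'(2) P(2)]
    by blast
qed

lemma families_const:
  assumes "F \<in> S" "subgroup S (aut_group n)"
  shows "(\<lambda>t. F) \<in> families n S"
proof -
  obtain G where "F \<in> poly_map n" "G \<in> poly_map n" "G \<circ> F = aff_id n" "F \<circ> G = aff_id n"
    using subgroup.subset[OF assms(2)] assms(1) by (auto simp: aut_def)
  then show ?thesis
    unfolding families_def using assms(1) by (auto intro!: poly_family_const exI[of _ "\<lambda>t. G"])
qed

lemma families_mono: "\<Phi> \<in> families n S \<Longrightarrow> (\<And>t. t \<noteq> 0 \<Longrightarrow> \<Phi> t \<in> S') \<Longrightarrow> \<Phi> \<in> families n S'"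
  unfolding families_def by auto

lemma degenerations_subgroup:
  assumes "subgroup S (aut_group n)"
  shows "subgroup (degenerations n S) (aut_group n)"
proof (rule group.subgroupI[OF group_aut_group])
  show "degenerations n S \<subseteq> carrier (aut_group n)"
    using families_inverse[OF _ assms] by (auto simp: degenerations_def)
  show "degenerations n S \<noteq> {}"
    using families_const[OF subgroup.one_closed[OF assms] assms] by (auto simp: degenerations_def)
next
  fix F assume "F \<in> degenerations n S"
  then obtain \<Phi> where "\<Phi> \<in> families n S" "F = \<Phi> 0" by (auto simp: degenerations_def)
  then show "inv\<^bsub>aut_group n\<^esub> F \<in> degenerations n S"
    using families_inverse[OF _ assms] unfolding degenerations_def by (metis image_eqI)
next
  fix F G assume "F \<in> degenerations n S" "G \<in> degenerations n S"
  then obtain \<Phi> \<Phi>' where "\<Phi> \<in> families n S" "F = \<Phi> 0" "\<Phi>' \<in> families n S" "G = \<Phi>' 0"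
    by (auto simp: degenerations_def)
  then show "F \<otimes>\<^bsub>aut_group n\<^esub> G \<in> degenerations n S"
    using families_comp[OF _ _ assms, of \<Phi> \<Phi>'] unfolding degenerations_def
    by (auto intro!: image_eqI[of _ _ "\<lambda>t. \<Phi> t \<circ> \<Phi>' t"])
qed

lemma subset_degenerations: "subgroup S (aut_group n) \<Longrightarrow> S \<subseteq> degenerations n S"
  unfolding degenerations_def by (auto intro: image_eqI[OF _ families_const])

lemma degenerations_trivial: "degenerations n {aff_id n} \<subseteq> {aff_id n}"
  unfolding degenerations_def families_def using poly_family_eq_aff_id_at_0 by auto

text \<open>A commutator of degenerations is the degeneration of the commutators along the families.\<close>
lemma derived_degenerations:
  assumes S: "subgroup S (aut_group n)"
  shows "derived (aut_group n) (degenerations n S) \<subseteq> degenerations n (derived (aut_group n) S)"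
proof -
  let ?G = "aut_group n"
  have "derived_set ?G (degenerations n S) \<subseteq> degenerations n (derived ?G S)"
  proof
    fix x assume "x \<in> derived_set ?G (degenerations n S)"
    then obtain \<Phi> \<Phi>' where F: "\<Phi> \<in> families n S" "\<Phi>' \<in> families n S"
      and x: "x = \<Phi> 0 \<otimes>\<^bsub>?G\<^esub> \<Phi>' 0 \<otimes>\<^bsub>?G\<^esub> inv\<^bsub>?G\<^esub> (\<Phi> 0) \<otimes>\<^bsub>?G\<^esub> inv\<^bsub>?G\<^esub> (\<Phi>' 0)"
      by (auto simp: degenerations_def)
    obtain \<Psi> where W: "\<Psi> \<in> families n S" "\<forall>t. inv\<^bsub>?G\<^esub> (\<Phi> t) = \<Psi> t"
      using families_inverse[OF F(1) S] by auto
    obtain \<Psi>' where W': "\<Psi>' \<in> families n S" "\<forall>t. inv\<^bsub>?G\<^esub> (\<Phi>' t) = \<Psi>' t"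
      using families_inverse[OF F(2) S] by auto
    define X where "X t = \<Phi> t \<circ> \<Phi>' t \<circ> \<Psi> t \<circ> \<Psi>' t" for t
    have "X t \<in> derived ?G S" if "t \<noteq> 0" for t
    proof -
      have "\<Phi> t \<in> S" "\<Phi>' t \<in> S" using F that by (auto simp: families_def)
      then have "\<Phi> t \<otimes>\<^bsub>?G\<^esub> \<Phi>' t \<otimes>\<^bsub>?G\<^esub> inv\<^bsub>?G\<^esub> (\<Phi> t) \<otimes>\<^bsub>?G\<^esub> inv\<^bsub>?G\<^esub> (\<Phi>' t)
          \<in> derived_set ?G S"
        by blast
      then have "X t \<in> derived_set ?G S" using W W' unfolding X_def by simp
      then show ?thesis unfolding derived_def by (rule generate.incl)
    qed
    moreover have "X \<in> families n S" unfolding X_def by (intro families_comp F W W' S)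
    ultimately have "X \<in> families n (derived ?G S)" using families_mono by blast
    moreover have "x = X 0" using x W W' by (simp add: X_def)
    ultimately show "x \<in> degenerations n (derived ?G S)" by (auto simp: degenerations_def)
  qed
  moreover have "subgroup (derived ?G S) ?G"
    using group.derived_is_subgroup[OF group_aut_group subgroup.subset[OF S]] .
  ultimately show ?thesis unfolding derived_def[of _ "degenerations n S"]
    by (intro group.generate_subgroup_incl[OF group_aut_group] degenerations_subgroup)
qed

lemma derived_pow_degenerations:
  assumes "subgroup S (aut_group n)"
  shows "(derived (aut_group n) ^^ m) (degenerations n S)
    \<subseteq> degenerations n ((derived (aut_group n) ^^ m) S)"
proof (induction m)
  case (Suc m)
  have sub: "subgroup ((derived (aut_group n) ^^ m) S) (aut_group n)"
    using group.exp_of_derived_is_subgroup[OF group_aut_group assms] .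
  have "(derived (aut_group n) ^^ Suc m) (degenerations n S)
      \<subseteq> derived (aut_group n) (degenerations n ((derived (aut_group n) ^^ m) S))"
    using group.mono_derived[OF group_aut_group Suc.IH] by simp
  also have "\<dots> \<subseteq> degenerations n ((derived (aut_group n) ^^ Suc m) S)"
    using derived_degenerations[OF sub] by simp
  finally show ?case .
qed simp

lemma derived_pow_degenerations_trivial:
  assumes "subgroup S (aut_group n)" "(derived (aut_group n) ^^ k) S = {aff_id n}"
  shows "(derived (aut_group n) ^^ k) (degenerations n S) \<subseteq> {aff_id n}"
  using derived_pow_degenerations[OF assms(1), of k] degenerations_trivial[of n] assms(2) by simp


section \<open>The Jacobian matrix as a degeneration\<close>

definition jacobian_mat :: "((nat \<Rightarrow> complex) \<Rightarrow> nat \<Rightarrow> complex) \<Rightarrow> (nat \<Rightarrow> complex) \<Rightarrow> nat \<Rightarrow> nat \<Rightarrow> complex" where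
  "jacobian_mat g a i k = partial_deriv (\<lambda>p. g p i) a k"

definition rescaled_conj :: "nat \<Rightarrow> complex \<Rightarrow> ((nat \<Rightarrow> complex) \<Rightarrow> nat \<Rightarrow> complex)
    \<Rightarrow> (nat \<Rightarrow> complex) \<Rightarrow> (nat \<Rightarrow> complex) \<Rightarrow> nat \<Rightarrow> complex" where
  "rescaled_conj n t g a =
     homothety n (1/t) \<circ> translation n (\<lambda>i. - g a i) \<circ> g \<circ> translation n a \<circ> homothety n t"

lemma rescaled_conj_inverse:
  assumes g': "g' \<in> poly_map n" and inverse: "g' \<circ> g = aff_id n" and t: "t \<noteq> 0"
    and b: "\<And>i. i < n \<Longrightarrow> b i = g a i"
  shows "rescaled_conj n t g' b \<circ> rescaled_conj n t g a = aff_id n"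
proof
  fix x
  have g'b: "g' b = aff_id n a"
    using poly_map_cong[OF g', of b "g a"] b inverse by (metis comp_apply)
  have "translation n b (homothety n t (homothety n (1/t) (translation n (\<lambda>i. - g a i) z))) = aff_id n z"
    for z using t b by (auto simp: fun_eq_iff homothety_def translation_def aff_id_def)
  moreover have "g' (aff_id n z) = g' z" for z by (rule poly_map_aff_id_cong[OF g'])
  moreover have "g' (g z) = aff_id n z" for z using inverse by (metis comp_apply)
  moreover have "translation n (\<lambda>i. - g' b i) (aff_id n (translation n a (homothety n t x)))
      = homothety n t x"
    using g'b by (auto simp: fun_eq_iff homothety_def translation_def aff_id_def)
  moreover have "homothety n (1/t) (homothety n t x) = aff_id n x"
    using t by (auto simp: fun_eq_iff homothety_def aff_id_def)
  ultimately show "(rescaled_conj n t g' b \<circ> rescaled_conj n t g a) x = aff_id n x"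
    unfolding rescaled_conj_def comp_def by simp
qed

definition first_order_term :: "nat \<Rightarrow> ((nat \<Rightarrow> complex) \<Rightarrow> nat \<Rightarrow> complex) \<Rightarrow> (nat \<Rightarrow> complex)
    \<Rightarrow> nat \<Rightarrow> (nat \<Rightarrow> complex) \<Rightarrow> complex" where
  "first_order_term n h a i = (SOME f'. first_order_expansion n (\<lambda>p. h p i) a f' (jacobian_mat h a i))"

lemma first_order_term:
  assumes "h \<in> poly_map n" "i < n"
  shows "first_order_term n h a i \<in> poly_fun (Suc n)"
    and "h (\<lambda>k. a k + q n * q k) i = h a i + q n * first_order_term n h a i q"
    and "q n = 0 \<Longrightarrow> first_order_term n h a i q = (\<Sum>k<n. jacobian_mat h a i k * q k)"
proof -
  have "first_order_expansion n (\<lambda>p. h p i) a (first_order_term n h a i) (jacobian_mat h a i)"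
    unfolding first_order_term_def jacobian_mat_def
    by (rule someI_ex[OF poly_fun_first_order_expansion_partial_deriv[OF poly_map_component[OF assms]]])
  then show "first_order_term n h a i \<in> poly_fun (Suc n)"
    "h (\<lambda>k. a k + q n * q k) i = h a i + q n * first_order_term n h a i q"
    "q n = 0 \<Longrightarrow> first_order_term n h a i q = (\<Sum>k<n. jacobian_mat h a i k * q k)"
    unfolding first_order_expansion_def by blast+
qed

definition rescaled_family :: "nat \<Rightarrow> ((nat \<Rightarrow> complex) \<Rightarrow> nat \<Rightarrow> complex) \<Rightarrow> (nat \<Rightarrow> complex)
    \<Rightarrow> complex \<Rightarrow> (nat \<Rightarrow> complex) \<Rightarrow> nat \<Rightarrow> complex" where
  "rescaled_family n h a = (\<lambda>t x i. if i < n then first_order_term n h a i (x(n := t)) else 0)"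

lemma poly_family_rescaled_family:
  assumes h: "h \<in> poly_map n"
  shows "poly_family n (rescaled_family n h a)"
  unfolding poly_family_def
proof (intro conjI allI impI)
  fix t
  show "rescaled_family n h a t \<in> poly_map n"
  proof (rule poly_mapI)
    fix i assume i: "i < n"
    define \<sigma> where "\<sigma> k = (if k = n then (\<lambda>x::nat \<Rightarrow> complex. t) else (\<lambda>x. x k))" for k
    have "(\<lambda>x. first_order_term n h a i (\<lambda>k. \<sigma> k x)) \<in> poly_fun n"
      by (rule poly_fun_subst[OF first_order_term(1)[OF h i]]) (auto simp: \<sigma>_def intro: poly_fun.intros)
    moreover have "(\<lambda>k. \<sigma> k x) = x(n := t)" for x by (auto simp: \<sigma>_def)
    ultimately show "(\<lambda>p. rescaled_family n h a t p i) \<in> poly_fun n"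
      using i by (simp add: rescaled_family_def)
  qed (simp add: rescaled_family_def)
next
  fix i assume "i < n"
  then show "(\<lambda>p. rescaled_family n h a (p n) p i) \<in> poly_fun (Suc n)"
    using first_order_term(1)[OF h] by (simp add: rescaled_family_def)
qed

lemma rescaled_family_eq_rescaled_conj:
  assumes h: "h \<in> poly_map n" and t: "t \<noteq> 0"
  shows "rescaled_family n h a t = rescaled_conj n t h a"
proof (intro ext)
  fix x i
  show "rescaled_family n h a t x i = rescaled_conj n t h a x i"
  proof (cases "i < n")
    case True
    let ?q = "x(n := t)"
    have "h (translation n a (homothety n t x)) = h (\<lambda>k. a k + ?q n * ?q k)"
      by (rule poly_map_cong[OF h]) (auto simp: translation_def homothety_def algebra_simps)
    then have "h (translation n a (homothety n t x)) i = h a i + t * first_order_term n h a i ?q"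
      using first_order_term(2)[OF h True, of a ?q] by simp
    then show ?thesis
      using True t by (simp add: rescaled_family_def rescaled_conj_def homothety_def translation_def)
  qed (simp add: rescaled_family_def rescaled_conj_def homothety_def)
qed

lemma rescaled_family_at_0: "h \<in> poly_map n \<Longrightarrow> rescaled_family n h a 0 = mat_map n (jacobian_mat h a)"
  by (auto simp: fun_eq_iff rescaled_family_def mat_map_def first_order_term(3) sum_lessThan_fun_upd)

lemma jacobian_mat_degeneration:
  assumes H: "subgroup H (aut_group n)" and jonq: "jonq n \<subseteq> H" and g: "g \<in> H"
  shows "mat_map n (jacobian_mat g a) \<in> degenerations n H"
proof -
  obtain g' where g: "g \<in> poly_map n" "g' \<in> poly_map n" "g' \<circ> g = aff_id n" "g \<circ> g' = aff_id n"
    using subgroup.subset[OF H] g by (auto simp: aut_def)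
  define b where "b = g a"
  have "g' b i = a i" if "i < n" for i
    using g(3) that by (auto simp: b_def aff_id_def dest: fun_cong[of _ _ a])
  then have inverse: "rescaled_conj n t g' b \<circ> rescaled_conj n t g a = aff_id n"
    "rescaled_conj n t g a \<circ> rescaled_conj n t g' b = aff_id n" if "t \<noteq> 0" for t
    using rescaled_conj_inverse[OF g(2,3) that] rescaled_conj_inverse[OF g(1,4) that]
    by (simp_all add: b_def)
  have "rescaled_conj n t g a \<in> H" if "t \<noteq> 0" for t
    using jonq homothety_jonq translation_jonq that subgroup.m_closed[OF H] \<open>g \<in> H\<close>
    by (simp add: rescaled_conj_def subset_iff)
  then have "rescaled_family n g a \<in> families n H"
    unfolding families_def using inverse poly_family_rescaled_family[OF g(1)]
      poly_family_rescaled_family[OF g(2)] rescaled_family_eq_rescaled_conj[OF g(1)]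
      rescaled_family_eq_rescaled_conj[OF g(2)]
    by (auto intro!: exI[of _ "rescaled_family n g' b"])
  then show ?thesis unfolding degenerations_def
    by (rule image_eqI[rotated]) (simp add: rescaled_family_at_0[OF g(1)])
qed


section \<open>A lower transvection in every subgroup containing a non-triangular matrix\<close>

lemma nontrivial_relation_if_supported_below:
  fixes y :: "'a \<Rightarrow> nat \<Rightarrow> 'b::field"
  assumes "finite A" "j < card A" "\<And>a r. a \<in> A \<Longrightarrow> j \<le> r \<Longrightarrow> y a r = 0"
  shows "\<exists>l. (\<exists>a\<in>A. l a \<noteq> 0) \<and> (\<forall>r. (\<Sum>a\<in>A. l a * y a r) = 0)"
  using assms
proof (induction j arbitrary: A y)
  case 0
  then obtain a where "a \<in> A" by (auto simp: card_gt_0_iff)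
  then show ?case using 0 by (auto intro!: exI[of _ "\<lambda>x. if x = a then 1 else 0"])
next
  case (Suc j)
  show ?case
  proof (cases "\<forall>a\<in>A. y a j = 0")
    case True
    have "y a r = 0" if "a \<in> A" "j \<le> r" for a r
      using True Suc.prems(3)[of a r] that by (cases "r = j") auto
    then show ?thesis using Suc.IH[of A y] Suc.prems(1,2) by simp
  next
    case False
    then obtain b where b: "b \<in> A" "y b j \<noteq> 0" by blast
    \<comment> \<open>Gaussian elimination of the coordinate \<open>j\<close> using the pivot vector \<open>y b\<close>\<close>
    define z where "z a = (\<lambda>r. y a r - (y a j / y b j) * y b r)" for a
    have "\<exists>m. (\<exists>a\<in>A - {b}. m a \<noteq> 0) \<and> (\<forall>r. (\<Sum>a\<in>A - {b}. m a * z a r) = 0)"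
    proof (rule Suc.IH)
      show "z a r = 0" if "a \<in> A - {b}" "j \<le> r" for a r
        using that b Suc.prems(3) by (cases "r = j") (auto simp: z_def)
    qed (use Suc.prems b in auto)
    then obtain m where m: "\<exists>a\<in>A - {b}. m a \<noteq> 0" "\<And>r. (\<Sum>a\<in>A - {b}. m a * z a r) = 0"
      by blast
    define l where "l a = (if a = b then - (\<Sum>a'\<in>A - {b}. m a' * (y a' j / y b j)) else m a)" for a
    have "(\<Sum>a\<in>A. l a * y a r) = 0" for r
    proof -
      have z: "m a * z a r = m a * y a r - (m a * (y a j / y b j)) * y b r" for a
        by (simp add: z_def algebra_simps)
      have "(\<Sum>a\<in>A. l a * y a r) = l b * y b r + (\<Sum>a\<in>A - {b}. m a * y a r)"
        using Suc.prems(1) b by (simp add: sum.remove l_def)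
      also have "(\<Sum>a\<in>A - {b}. m a * y a r)
          = (\<Sum>a\<in>A - {b}. m a * z a r) + (\<Sum>a\<in>A - {b}. m a * (y a j / y b j)) * y b r"
        by (simp add: z sum_subtractf sum_distrib_right)
      finally show ?thesis using m(2) by (simp add: l_def)
    qed
    moreover have "\<exists>a\<in>A. l a \<noteq> 0" using m(1) by (auto simp: l_def)
    ultimately show ?thesis by blast
  qed
qed

lemma aut_group_r_inv_apply:
  "M \<in> aut n \<Longrightarrow> M ((inv\<^bsub>aut_group n\<^esub> M) p) = aff_id n p"
  using group.r_inv[OF group_aut_group, of M n] by (simp add: fun_eq_iff)

lemma aut_group_l_inv_apply:
  "M \<in> aut n \<Longrightarrow> (inv\<^bsub>aut_group n\<^esub> M) (M p) = aff_id n p"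
  using group.l_inv[OF group_aut_group, of M n] by (simp add: fun_eq_iff)

lemma inv_unit_vec_vanishes:
  assumes M: "M \<in> aut n" and row: "\<And>p. M p i = c * p j" and "c \<noteq> 0" "i < n" "a \<noteq> i"
  shows "(inv\<^bsub>aut_group n\<^esub> M) (unit_vec a) j = 0"
proof -
  have "c * (inv\<^bsub>aut_group n\<^esub> M) (unit_vec a) j = M ((inv\<^bsub>aut_group n\<^esub> M) (unit_vec a)) i"
    by (simp add: row)
  also have "\<dots> = 0" using aut_group_r_inv_apply[OF M] assms by (simp add: aff_id_def unit_vec_def)
  finally show ?thesis using \<open>c \<noteq> 0\<close> by simp
qed

lemma inv_unit_vec_beyond:
  assumes M: "M \<in> aut n" "linear_endo M" and row: "\<And>p. M p i = c * p j"
    and "c \<noteq> 0" "j < i" "i < n"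
  obtains a r where "a < i" "j < r" "r < n" "(inv\<^bsub>aut_group n\<^esub> M) (unit_vec a) r \<noteq> 0"
proof -
  define y where "y a = (inv\<^bsub>aut_group n\<^esub> M) (unit_vec a)" for a
  have "inv\<^bsub>aut_group n\<^esub> M \<in> poly_map n"
    using group.inv_closed[OF group_aut_group] M(1) by (simp add: aut_imp_poly_map)
  then have outside: "y a r = 0" if "n \<le> r" for a r using that by (simp add: y_def poly_map_outside)
  \<comment> \<open>the \<open>i\<close> vectors \<open>y a\<close>, \<open>a < i\<close>, are linearly independent, so they cannot all be
    supported on the \<open>j < i\<close> coordinates below \<open>j\<close>\<close>
  have "\<exists>a<i. \<exists>r. j < r \<and> r < n \<and> y a r \<noteq> 0"
  proof (rule ccontr)
    assume none: "\<not> ?thesis"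
    have "y a r = 0" if "a \<in> {..<i}" "j \<le> r" for a r
    proof -
      consider "r = j" | "j < r" "r < n" | "n \<le> r" using \<open>j \<le> r\<close> by linarith
      then show ?thesis
      proof cases
        case 1 then show ?thesis
          using inv_unit_vec_vanishes[OF M(1) row \<open>c \<noteq> 0\<close> \<open>i < n\<close>, of a] that by (simp add: y_def)
      qed (use none that outside in auto)
    qed
    then obtain l where l: "\<exists>a\<in>{..<i}. l a \<noteq> 0" "\<forall>r. (\<Sum>a\<in>{..<i}. l a * y a r) = 0"
      using nontrivial_relation_if_supported_below[of "{..<i}" j y] \<open>j < i\<close> by auto
    then obtain b where b: "b < i" "l b \<noteq> 0" by auto
    have "(\<lambda>k. \<Sum>a<i. l a * unit_vec a k) = (\<lambda>k. \<Sum>a<i. l a * M (y a) k)"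
      using aut_group_r_inv_apply[OF M(1)] \<open>i < n\<close> by (intro ext sum.cong) (auto simp: y_def aff_id_def unit_vec_def)
    also have "\<dots> = M (\<lambda>k. \<Sum>a<i. l a * y a k)"
      using linear_endo_sum[OF M(2), of "{..<i}"] by simp
    also have "\<dots> = (\<lambda>k. 0)" using l(2) linear_endo_zero[OF M(2)] by simp
    finally have "(\<Sum>a<i. l a * unit_vec a b) = 0" by (rule fun_cong)
    then show False using sum_unit_vec(2)[OF b(1), of l] b by simp
  qed
  then show ?thesis using that unfolding y_def by blast
qed

lemma conj_transvection_by_linear:
  assumes M: "M \<in> aut n" "linear_endo M" and row: "\<And>p. M p i = c * p j"
    and "a < n" "i < n"
  shows "inv\<^bsub>aut_group n\<^esub> M \<circ> transvection n a i 1 \<circ> M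
    = column_transvection n j (\<lambda>k. c * (inv\<^bsub>aut_group n\<^esub> M) (unit_vec a) k)"
proof (intro ext)
  fix p k
  let ?M' = "inv\<^bsub>aut_group n\<^esub> M"
  have M'_poly: "?M' \<in> poly_map n"
    using group.inv_closed[OF group_aut_group] M(1) by (simp add: aut_imp_poly_map)
  have "transvection n a i 1 (M p) = (\<lambda>k. M p k + (c * p j) * unit_vec a k)"
    using aut_imp_poly_map[OF M(1)] row assms
    by (auto simp: transvection_def unit_vec_def fun_eq_iff poly_map_outside)
  then have "?M' (transvection n a i 1 (M p)) = (\<lambda>k. aff_id n p k + (c * p j) * ?M' (unit_vec a) k)"
    using linear_endoD[OF linear_endo_aut_inv[OF M]] aut_group_l_inv_apply[OF M(1)] by simp
  then show "(?M' \<circ> transvection n a i 1 \<circ> M) p k = column_transvection n j (\<lambda>k. c * ?M' (unit_vec a) k) p k"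
    using M'_poly by (auto simp: column_transvection_def aff_id_def poly_map_outside)
qed

lemma dilation_conj_transvection:
  "j \<noteq> r \<Longrightarrow> j < n \<Longrightarrow> \<mu> \<noteq> 0 \<Longrightarrow> dilation n r (1/\<mu>) \<circ> transvection n r j s \<circ> dilation n r \<mu> = transvection n r j (s/\<mu>)"
  by (auto simp: fun_eq_iff dilation_def transvection_def field_simps)

lemma transvection_in_subgroup_rescale:
  assumes K: "subgroup K (aut_group n)" and jonq: "jonq n \<subseteq> K"
    and "transvection n r j s \<in> K" "s \<noteq> 0" "t \<noteq> 0" "j \<noteq> r" "j < n"
  shows "transvection n r j t \<in> K"
proof -
  have "dilation n r (t/s) \<in> K" "dilation n r (s/t) \<in> K"
    using jonq dilation_jonq assms(4,5) by auto
  then have "dilation n r (1/(s/t)) \<circ> transvection n r j s \<circ> dilation n r (s/t) \<in> K"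
    using subgroup.m_closed[OF K] assms(3) by simp
  then show ?thesis using dilation_conj_transvection[of j r n "s/t" s] assms by simp
qed

lemma transvection_of_column_transvection:
  assumes K: "subgroup K (aut_group n)" and jonq: "jonq n \<subseteq> K"
    and col: "column_transvection n j x \<in> K" and "x j = 0" "j < r" "r < n"
  shows "transvection n r j (x r / 2) \<in> K"
proof -
  let ?x' = "x(r := x r / 2)"
  \<comment> \<open>conjugating by a dilation halves \<open>x r\<close>; the quotient of the two maps is a transvection\<close>
  have "dilation n r (1/2) \<in> K" "dilation n r 2 \<in> K" using jonq dilation_jonq by auto
  then have "dilation n r (1/2) \<circ> column_transvection n j x \<circ> dilation n r 2 \<in> K"
    using subgroup.m_closed[OF K] col by simp
  moreover have "dilation n r (1/2) \<circ> column_transvection n j x \<circ> dilation n r 2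
      = column_transvection n j ?x'"
    using assms by (auto simp: dilation_def column_transvection_def fun_eq_iff)
  ultimately have x': "column_transvection n j ?x' \<in> K" by simp
  then have "column_transvection n j ?x' \<in> aut n" using subgroup.subset[OF K] by auto
  moreover have "j < n" "?x' j = 0" using assms by auto
  ultimately have "inv\<^bsub>aut_group n\<^esub> (column_transvection n j ?x') = column_transvection n j (\<lambda>k. - ?x' k)"
    by (intro aut_group_inv_eq column_transvection_poly_map column_transvection_inverse)
  then have "column_transvection n j x \<circ> column_transvection n j (\<lambda>k. - ?x' k) \<in> K"
    using subgroup.m_closed[OF K col subgroup.m_inv_closed[OF K x']] by simp
  moreover have "column_transvection n j x \<circ> column_transvection n j (\<lambda>k. - ?x' k)
      = transvection n r j (x r / 2)"
    using assms by (auto simp: column_transvection_def transvection_def fun_eq_iff)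
  ultimately show ?thesis by simp
qed

lemma row_transvection_clears_row:
  assumes "j < n" "\<And>k. k < j \<Longrightarrow> C k = 0" "C j \<noteq> 0"
  shows "(\<Sum>k<n. C k * row_transvection n j (\<lambda>s. if j < s then - C s / C j else 0) p k) = C j * p j"
proof -
  define w where "w = (\<lambda>s. if j < s then - C s / C j else 0)"
  have "(\<Sum>k<n. C k * row_transvection n j w p k)
      = (\<Sum>k<n. C k * p k + (if k = j then C j * (\<Sum>s<n. w s * p s) else 0))"
    by (rule sum.cong) (auto simp: row_transvection_def algebra_simps)
  also have "\<dots> = (\<Sum>k<n. (C k + C j * w k) * p k)"
    using assms(1) by (simp add: sum.distrib sum_distrib_left algebra_simps)
  also have "\<dots> = (\<Sum>k<n. if k = j then C j * p k else 0)"
    using assms(2,3) by (intro sum.cong) (auto simp: w_def)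
  finally show ?thesis using assms(1) by (simp add: w_def)
qed

lemma lower_transvections_in_subgroup:
  assumes K: "subgroup K (aut_group n)" and jonq: "jonq n \<subseteq> K"
    and C: "mat_map n C \<in> K" "C i j \<noteq> 0" "j < i" "i < n"
  obtains j' r where "j' < r" "r < n" "\<And>t. t \<noteq> 0 \<Longrightarrow> transvection n r j' t \<in> K"
proof -
  define j' where "j' = (LEAST k. C i k \<noteq> 0)"
  have C_j': "C i j' \<noteq> 0" unfolding j'_def by (rule LeastI[of _ j]) (rule C(2))
  have "j' \<le> j" unfolding j'_def by (rule Least_le) (rule C(2))
  have left_zero: "C i k = 0" if "k < j'" for k using not_less_Least[of k "\<lambda>k. C i k \<noteq> 0"] that j'_def by blast
  have "j' < i" "j' < n" using C \<open>j' \<le> j\<close> by auto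
  \<comment> \<open>clear row \<open>i\<close> of \<open>C\<close> to the right of its first nonzero entry by column operations\<close>
  define M where "M = mat_map n C \<circ> row_transvection n j' (\<lambda>s. if j' < s then - C i s / C i j' else 0)"
  have "row_transvection n j' (\<lambda>s. if j' < s then - C i s / C i j' else 0) \<in> K"
    using jonq row_transvection_jonq by auto
  then have "M \<in> K" using subgroup.m_closed[OF K C(1)] by (simp add: M_def)
  then have M: "M \<in> aut n" "linear_endo M"
    using subgroup.subset[OF K] linear_endo_comp linear_endo_mat_map linear_endo_row_transvection
    by (auto simp: M_def)
  have row: "M p i = C i j' * p j'" for p
    using row_transvection_clears_row[of j' n "C i", OF \<open>j' < n\<close> left_zero C_j'] C(4)
    by (simp add: M_def mat_map_def)
  obtain a r where ar: "a < i" "j' < r" "r < n" and nonzero: "(inv\<^bsub>aut_group n\<^esub> M) (unit_vec a) r \<noteq> 0"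
    using inv_unit_vec_beyond[OF M row C_j' \<open>j' < i\<close> C(4)] .
  define x where "x = (\<lambda>k. C i j' * (inv\<^bsub>aut_group n\<^esub> M) (unit_vec a) k)"
  have "transvection n a i 1 \<in> K" using jonq transvection_jonq[OF ar(1) C(4)] by auto
  then have "inv\<^bsub>aut_group n\<^esub> M \<circ> transvection n a i 1 \<circ> M \<in> K"
    using subgroup.m_closed[OF K subgroup.m_closed[OF K subgroup.m_inv_closed[OF K \<open>M \<in> K\<close>]]]
      \<open>M \<in> K\<close> by simp
  then have "column_transvection n j' x \<in> K"
    using conj_transvection_by_linear[OF M row] ar C(4) by (simp add: x_def)
  moreover have "x j' = 0"
    using inv_unit_vec_vanishes[OF M(1) row C_j' C(4)] ar by (simp add: x_def)
  ultimately have "transvection n r j' (x r / 2) \<in> K"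
    using transvection_of_column_transvection[OF K jonq] ar by blast
  moreover have "x r / 2 \<noteq> 0" using nonzero C_j' by (simp add: x_def)
  ultimately show ?thesis
    using transvection_in_subgroup_rescale[OF K jonq _ _ _ _ \<open>j' < n\<close>] ar by (intro that[of j' r]) auto
qed


section \<open>Transvections in the derived series\<close>

lemma commutator_in_derived:
  "x \<in> H \<Longrightarrow> y \<in> H \<Longrightarrow> x \<otimes>\<^bsub>G\<^esub> y \<otimes>\<^bsub>G\<^esub> inv\<^bsub>G\<^esub> x \<otimes>\<^bsub>G\<^esub> inv\<^bsub>G\<^esub> y \<in> derived G H"
  unfolding derived_def by (rule generate.incl) blast

text \<open>In \<open>SL\<^sub>2\<close> the elements \<open>w(u) = e\<^sub>1\<^sub>2(u) e\<^sub>2\<^sub>1(-1/u) e\<^sub>1\<^sub>2(u)\<close> satisfy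
  \<open>w(2) w(1)\<^sup>-\<^sup>1 = diag(2, 1/2)\<close>.\<close>
lemma dilations_eq_transvection_product:
  assumes "j < r" "r < n"
  shows "transvection n j r 2 \<circ> transvection n r j (-1/2) \<circ> transvection n j r 2 \<circ>
      transvection n j r (-1) \<circ> transvection n r j 1 \<circ> transvection n j r (-1)
    = dilation n j 2 \<circ> dilation n r (1/2)"
  using assms by (auto simp: fun_eq_iff transvection_def dilation_def field_simps)

lemma dilations_commutator_transvection_upper:
  assumes "j < r" "r < n"
  shows "(dilation n j 2 \<circ> dilation n r (1/2)) \<circ> transvection n j r s \<circ>
      (dilation n j (1/2) \<circ> dilation n r 2) \<circ> transvection n j r (- s)
    = transvection n j r (3 * s)"
  using assms by (auto simp: fun_eq_iff transvection_def dilation_def field_simps)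

lemma dilations_commutator_transvection_lower:
  assumes "j < r" "r < n"
  shows "(dilation n j 2 \<circ> dilation n r (1/2)) \<circ> transvection n r j s \<circ>
      (dilation n j (1/2) \<circ> dilation n r 2) \<circ> transvection n r j (- s)
    = transvection n r j (- 3 * s / 4)"
  using assms by (auto simp: fun_eq_iff transvection_def dilation_def field_simps)

lemma transvections_in_derived:
  assumes X: "subgroup X (aut_group n)" and "j < r" "r < n"
    and E: "\<And>t. t \<noteq> 0 \<Longrightarrow> transvection n j r t \<in> X \<and> transvection n r j t \<in> X"
    and "t \<noteq> 0"
  shows "transvection n j r t \<in> derived (aut_group n) X \<and> transvection n r j t \<in> derived (aut_group n) X"
proof -
  let ?G = "aut_group n"
  define h where "h = dilation n j 2 \<circ> dilation n r (1/2)"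
  have in_X: "transvection n j r s \<in> X" "transvection n r j s \<in> X" if "s \<noteq> 0" for s
    using E[OF that] by auto
  then have "transvection n j r 2 \<circ> transvection n r j (-1/2) \<circ> transvection n j r 2 \<circ>
      transvection n j r (-1) \<circ> transvection n r j 1 \<circ> transvection n j r (-1) \<in> X"
    using subgroup.m_closed[OF X] by simp
  then have "h \<in> X"
    using dilations_eq_transvection_product[OF \<open>j < r\<close> \<open>r < n\<close>] by (simp add: h_def)
  have X_aut: "x \<in> aut n" if "x \<in> X" for x using subgroup.subset[OF X] that by auto
  have "inv\<^bsub>?G\<^esub> h = dilation n j (1/2) \<circ> dilation n r 2"
    using X_aut[OF \<open>h \<in> X\<close>] \<open>j < r\<close>
    by (intro aut_group_inv_eq poly_map_comp dilation_poly_map)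
      (auto simp: h_def dilation_def aff_id_def fun_eq_iff)
  moreover have "inv\<^bsub>?G\<^esub> (transvection n a b s) = transvection n a b (- s)"
    if "transvection n a b s \<in> X" "a \<noteq> b" "b < n" for a b s
    using that X_aut by (intro aut_group_inv_eq transvection_poly_map transvection_inverse) auto
  ultimately have commutators: "h \<otimes>\<^bsub>?G\<^esub> transvection n j r (t/3) \<otimes>\<^bsub>?G\<^esub> inv\<^bsub>?G\<^esub> h \<otimes>\<^bsub>?G\<^esub> inv\<^bsub>?G\<^esub> (transvection n j r (t/3))
      = transvection n j r t"
    and "h \<otimes>\<^bsub>?G\<^esub> transvection n r j (- 4 * t / 3) \<otimes>\<^bsub>?G\<^esub> inv\<^bsub>?G\<^esub> h
      \<otimes>\<^bsub>?G\<^esub> inv\<^bsub>?G\<^esub> (transvection n r j (- 4 * t / 3)) = transvection n r j t"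
    using in_X[of "t/3"] in_X[of "- 4 * t / 3"] \<open>t \<noteq> 0\<close> assms(2,3)
      dilations_commutator_transvection_upper[OF assms(2,3), of "t/3"]
      dilations_commutator_transvection_lower[OF assms(2,3), of "- 4 * t / 3"]
    by (simp_all add: h_def)
  moreover have "t/3 \<noteq> 0" "- 4 * t / 3 \<noteq> 0" using \<open>t \<noteq> 0\<close> by auto
  ultimately show ?thesis
    using commutator_in_derived[OF \<open>h \<in> X\<close> in_X(1), of "t/3" ?G]
      commutator_in_derived[OF \<open>h \<in> X\<close> in_X(2), of "- 4 * t / 3" ?G]
    by simp
qed

lemma transvections_in_derived_pow:
  assumes K: "subgroup K (aut_group n)" and "jonq n \<subseteq> K" "j < r" "r < n"
    and lower: "\<And>t. t \<noteq> 0 \<Longrightarrow> transvection n r j t \<in> K" and "t \<noteq> 0"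
  shows "transvection n r j t \<in> (derived (aut_group n) ^^ m) K"
proof -
  have "transvection n j r t \<in> (derived (aut_group n) ^^ m) K
      \<and> transvection n r j t \<in> (derived (aut_group n) ^^ m) K" if "t \<noteq> 0" for t
    using that
  proof (induction m arbitrary: t)
    case 0 then show ?case using assms lower transvection_jonq by auto
  next
    case (Suc m)
    then show ?case
      using transvections_in_derived[OF group.exp_of_derived_is_subgroup[OF group_aut_group K]]
        assms(3,4) by simp
  qed
  then show ?thesis using \<open>t \<noteq> 0\<close> by blast
qed

lemma (in group) solvable_subgroup_derived_pow_trivial:
  assumes "subgroup H G" "solvable (G\<lparr>carrier := H\<rparr>)"
  obtains k where "(derived G ^^ k) H = {\<one>}"
proof -
  interpret H: group "G\<lparr>carrier := H\<rparr>" using subgroup_imp_group[OF assms(1)] .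
  obtain k where k: "(derived (G\<lparr>carrier := H\<rparr>) ^^ k) H = {\<one>}"
    using H.solvable_iff_trivial_derived_seq assms(2) by auto
  have "(derived G ^^ m) H \<subseteq> H" for m
  proof (induction m)
    case (Suc m) then show ?case using derived_incl[OF Suc.IH assms(1)] by simp
  qed simp
  then have "(derived (G\<lparr>carrier := H\<rparr>) ^^ m) H = (derived G ^^ m) H" for m
    by (induction m) (simp_all add: derived_consistent[OF _ assms(1)])
  then show ?thesis using k that by simp
qed


theorem proposition3p4:
  fixes n :: nat and H :: "((nat \<Rightarrow> complex) \<Rightarrow> (nat \<Rightarrow> complex)) set"
  assumes "n \<ge> 2"
    and "subgroup H (aut_group n)"
    and "solvable ((aut_group n) \<lparr>carrier := H\<rparr>)"
    and "jonq n \<subseteq> H"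
  shows "H = jonq n"
proof (rule ccontr)
  assume "H \<noteq> jonq n"
  then obtain g where g: "g \<in> H" "g \<notin> jonq n" using assms(4) by blast
  then have "g \<in> aut n" using subgroup.subset[OF assms(2)] by auto
  then obtain a i j where ij: "j < i" "i < n" "jacobian_mat g a i j \<noteq> 0"
    using jonqI_partial_deriv g(2) unfolding jacobian_mat_def by blast
  define K where "K = degenerations n H"
  have K: "subgroup K (aut_group n)" "jonq n \<subseteq> K"
    using degenerations_subgroup[OF assms(2)] subset_degenerations[OF assms(2)] assms(4)
    by (auto simp: K_def)
  have jacobian: "mat_map n (jacobian_mat g a) \<in> K"
    using jacobian_mat_degeneration[OF assms(2,4) g(1)] by (simp add: K_def)
  obtain j' r where jr: "j' < r" "r < n" and lower: "\<And>t. t \<noteq> 0 \<Longrightarrow> transvection n r j' t \<in> K"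
    using lower_transvections_in_subgroup[OF K jacobian ij(3,1,2)] by blast
  obtain k where "(derived (aut_group n) ^^ k) H = {aff_id n}"
    using group.solvable_subgroup_derived_pow_trivial[OF group_aut_group assms(2,3)] by auto
  then have "(derived (aut_group n) ^^ k) K \<subseteq> {aff_id n}"
    unfolding K_def by (rule derived_pow_degenerations_trivial[OF assms(2)])
  moreover have "transvection n r j' 1 \<in> (derived (aut_group n) ^^ k) K"
    using transvections_in_derived_pow[OF K jr lower, of 1 k] by simp
  ultimately show False using transvection_ne_aff_id[of r j' n 1] jr by auto
qed

end
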